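(* Let $q\ge2$ be an integer, $d$ a positive integer and $F$ a finite field of characteristic $p$. Then the Char-$q$-$s$ network has a $d$-dimensional VLNC solution over $F$ with $s$-coefficient matrix $A_1\ne 0$ on $e_1$ if and only if $p$ divides $q$.
   Context: Vector linear network coding: each source $v$ generates $x_v\in F^d$; an edge out of a source $v$ carries $Ax_v$ for a $d\times d$ matrix $A$ over $F$; an edge out of an intermediate node carries $\sum A_{e',e}y_{e'}$ over the edges $e'$ entering that node; a terminal computes vectors $\sum B_ey_e$ over its incoming edges; a $d$-dimensional VLNC solution over $F$ is such a code with which every terminal computes each demanded message for all message choices. The Char-$q$-$s$ network (integer $q\ge2$): sources $s,x_1,\dots,x_{q+2}$; intermediate nodes $m_1,\dots,m_{q+3},n_1,\dots,n_{q+3}$; terminals $r_1,\dots,r_{q+3}$; edges: $(x_1,m_i)$ for $1\le i\le q+1$; $(s,m_1)$ and $(s,m_i)$ for $4\le i\le q+3$; $(x_i,m_j)$ for $2\le i,j\le q+2$, $i\ne j$; $(x_i,m_{q+3})$ for $1\le i\le q+2$; $e_i=(m_i,n_i)$ for $1\le i\le q+3$; $(n_i,r_i)$ for $1\le i\le q+2$; $(n_{q+3},r_i)$ and $(n_i,r_{q+3})$ for $1\le i\le q+2$; $(x_i,r_1)$ for $2\le i\le q+1$; $(x_1,r_{q+2})$; $(s,r_2)$; $(s,r_3)$. Demands: $r_1$ demands $x_{q+2}$; $r_i$ demands $x_i$ for $2\le i\le q+2$; $r_{q+3}$ demands $x_1$; no terminal demands $s$. In any $d$-dimensional VLNC over $F$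 the vector on $e_1$ has the form $y_{e_1}=M_1x_1+A_1s$ with $d\times d$ matrices $M_1,A_1$; $A_1$ is called the $s$-coefficient matrix on $e_1$. *)

theory Defs
  imports "HOL-Analysis.Analysis"
begin

text \<open>Messages are vectors in F^d, represented as
'a^'d with a finite index type 'd (so d = CARD('d) >= 1).  d x d matrices are 'a^'d^'d.\<close>

definition in_edges :: "('v \<times> 'v) set \<Rightarrow> 'v \<Rightarrow> ('v \<times> 'v) set" where
  "in_edges E u = {e \<in> E. snd e = u}"

text \<open>A d-dimensional vector linear network code: local coefficient matrices.
  srcC e : the matrix A on an edge e out of a source (carries A x_v);
  intC e' e : the matrix A_{e',e} for e' entering the tail of e (e out of an intermediate node);
  decC t v e : decoding matrix B_e used by terminal t to compute the message of source v.\<close>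

record ('a, 'd, 'v) vlnc =
  srcC :: "'v \<times> 'v \<Rightarrow> 'a^'d^'d"
  intC :: "'v \<times> 'v \<Rightarrow> 'v \<times> 'v \<Rightarrow> 'a^'d^'d"
  decC :: "'v \<Rightarrow> 'v \<Rightarrow> 'v \<times> 'v \<Rightarrow> 'a^'d^'d"

definition edge_vectors ::
  "('v \<times> 'v) set \<Rightarrow> 'v set \<Rightarrow> ('a::field, 'd::finite, 'v) vlnc
     \<Rightarrow> ('v \<Rightarrow> 'a^'d) \<Rightarrow> ('v \<times> 'v \<Rightarrow> 'a^'d) \<Rightarrow> bool" where
  "edge_vectors E Src C x y \<longleftrightarrow>
     (\<forall>e\<in>E. fst e \<in> Src \<longrightarrow> y e = srcC C e *v x (fst e)) \<and>
     (\<forall>e\<in>E. fst e \<notin> Src \<longrightarrow> y e = (\<Sum>e'\<in>in_edges E (fst e). intC C e' e *v y e'))"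

definition is_vlnc_solution ::
  "('v \<times> 'v) set \<Rightarrow> 'v set \<Rightarrow> 'v set \<Rightarrow> ('v \<Rightarrow> 'v set)
     \<Rightarrow> ('a::field, 'd::finite, 'v) vlnc \<Rightarrow> bool" where
  "is_vlnc_solution E Src Trm Dem C \<longleftrightarrow>
     (\<forall>x y. edge_vectors E Src C x y \<longrightarrow>
        (\<forall>t\<in>Trm. \<forall>v\<in>Dem t. (\<Sum>e\<in>in_edges E t. decC C t v e *v y e) = x v))"

datatype node = S | X nat | M nat | N nat | R nat

definition charq_edges :: "nat \<Rightarrow> (node \<times> node) set" where
  "charq_edges q =
     {(X 1, M i) | i. 1 \<le> i \<and> i \<le> q + 1}
   \<union> {(S, M 1)} \<union> {(S, M i) | i. 4 \<le> i \<and> i \<le> q + 3}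
   \<union> {(X i, M j) | i j. 2 \<le> i \<and> i \<le> q + 2 \<and> 2 \<le> j \<and> j \<le> q + 2 \<and> i \<noteq> j}
   \<union> {(X i, M (q + 3)) | i. 1 \<le> i \<and> i \<le> q + 2}
   \<union> {(M i, N i) | i. 1 \<le> i \<and> i \<le> q + 3}
   \<union> {(N i, R i) | i. 1 \<le> i \<and> i \<le> q + 2}
   \<union> {(N (q + 3), R i) | i. 1 \<le> i \<and> i \<le> q + 2}
   \<union> {(N i, R (q + 3)) | i. 1 \<le> i \<and> i \<le> q + 2}
   \<union> {(X i, R 1) | i. 2 \<le> i \<and> i \<le> q + 1}
   \<union> {(X 1, R (q + 2))} \<union> {(S, R 2)} \<union> {(S, R 3)}"

definition charq_sources :: "nat \<Rightarrow> node set" where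
  "charq_sources q = {S} \<union> {X i | i. 1 \<le> i \<and> i \<le> q + 2}"

definition charq_terminals :: "nat \<Rightarrow> node set" where
  "charq_terminals q = {R i | i. 1 \<le> i \<and> i \<le> q + 3}"

definition charq_demands :: "nat \<Rightarrow> node \<Rightarrow> node set" where
  "charq_demands q t =
     (if t = R 1 then {X (q + 2)}
      else if t = R (q + 3) then {X 1}
      else if (\<exists>i. 2 \<le> i \<and> i \<le> q + 2 \<and> t = R i) then {X (case t of R i \<Rightarrow> i | _ \<Rightarrow> 0)}
      else {})"

definition e1 :: "node \<times> node" where "e1 = (M 1, N 1)"

definition s_coeff_on_e1 :: "nat \<Rightarrow> ('a::field, 'd::finite, node) vlnc \<Rightarrow> 'a^'d^'d \<Rightarrow> bool" where
  "s_coeff_on_e1 q C A1 \<longleftrightarrow>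
     (\<exists>M1. \<forall>x y. edge_vectors (charq_edges q) (charq_sources q) C x y \<longrightarrow>
              y e1 = M1 *v x (X 1) + A1 *v x S)"

end

theory Submission
  imports Defs
begin

(*
  Write e_i for the vector on (m_i, n_i). Terminal r_t (2 <= t <= q+2) reads only e_t, e_{q+3} and
  sources other than x_2, ..., x_{q+2}; testing its decoding equation on single messages gives
  G_t P_t + H_t W = 0 on the global kernels P_t of e_t and W of e_{q+3}, with H_t W_{x_t} = 1.
  This makes every G_t invertible, so terminal r_{q+3} sees e_t through F_t W with
  F_t = D_t G_t^-1 H_t. As r_{q+3} must not see x_j, the F_t with t <> j sum to zero; hence all F_t
  equal one matrix T with q T = 0. If p does not divide q, then T = 0, r_{q+3} recovers x_1 from e_1
  alone, and the s-component of e_1 must vanish.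
  Conversely, if p divides q, send every message with identity matrices: e_{q+3} carries the sum of
  all messages, r_t recovers its demand as e_{q+3} - e_t minus its direct inputs, and
  e_1 + ... + e_{q+2} contains x_1 exactly q+1 times and every other message q times.
*)

lemma matrix_add_rdistrib: "(A + B) ** (C :: 'a::semiring_1^'n^'m) = A ** C + B ** C"
  by (simp add: matrix_matrix_mult_def vec_eq_iff sum.distrib distrib_right)

lemma matrix_neg_mult: "(- A) ** (B :: 'a::ring_1^'n^'m) = - (A ** B)"
  by (simp add: matrix_matrix_mult_def vec_eq_iff sum_negf)

lemma matrix_mult_neg: "A ** (- B :: 'a::ring_1^'n^'m) = - (A ** B)"
  by (simp add: matrix_matrix_mult_def vec_eq_iff sum_negf)

lemma matrix_neg_vector_mult: "(- A) *v x = - (A *v (x :: 'a::ring_1^'n))"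
  by (simp add: matrix_vector_mult_def vec_eq_iff sum_negf)

lemma matrix_sum_mult: "(\<Sum>i\<in>I. f i) ** (B :: 'a::semiring_1^'n^'m) = (\<Sum>i\<in>I. f i ** B)"
  by (induct I rule: infinite_finite_induct) (simp_all add: matrix_add_rdistrib)

lemma matrix_vector_sum_mult: "(\<Sum>i\<in>I. f i) *v (x :: 'a::semiring_1^'n) = (\<Sum>i\<in>I. f i *v x)"
  by (induct I rule: infinite_finite_induct) (simp_all add: matrix_vector_mult_add_rdistrib)

text \<open>The matrix core of the impossibility argument, with I = {2..q+2}: G t and H t are the
  maps through which terminal r_t reads e_t and e_{q+3}, P t j and W j are the coefficients of x_j
  on e_t and e_{q+3}, and D i is the map through which r_{q+3} reads e_i.\<close>

lemma decoding_constraints_force_annihilation: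
  fixes G H W D :: "nat \<Rightarrow> 'a::field^'d::finite^'d" and P :: "nat \<Rightarrow> nat \<Rightarrow> 'a^'d^'d"
    and A B :: "'a^'d^'d"
  assumes fin: "finite I" and char: "of_nat (card I - 1) \<noteq> (0::'a)"
    and HW: "\<And>t. t \<in> I \<Longrightarrow> H t ** W t = mat 1"
    and GP: "\<And>t j. t \<in> I \<Longrightarrow> j \<in> I - {t} \<Longrightarrow> G t ** P t j + H t ** W j = 0"
    and DP: "\<And>j. j \<in> I \<Longrightarrow> (\<Sum>i\<in>I - {j}. D i ** P i j) = 0"
    and t: "t \<in> I" and GH: "G t ** A + H t ** B = 0"
  shows "D t ** A = 0"
proof -
  have WH: "W j ** H j = mat 1" if "j \<in> I" for j
    using HW[OF that] matrix_left_right_inverse by blast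
  have "\<exists>K. K ** G i = mat 1" if i: "i \<in> I" for i
  proof -
    have "I - {i} \<noteq> {}"
      using char card_Diff_singleton[OF i] by force
    then obtain j where j: "j \<in> I - {i}" by blast
    have "G i ** (- (P i j ** H j ** W i)) = - ((G i ** P i j) ** H j ** W i)"
      by (simp add: matrix_mult_neg matrix_mul_assoc)
    also have "\<dots> = H i ** (W j ** H j) ** W i"
      using GP[OF i j] by (simp add: eq_neg_iff_add_eq_0[symmetric] matrix_neg_mult matrix_mul_assoc)
    also have "\<dots> = mat 1"
      using WH j HW i by simp
    finally show ?thesis
      using matrix_left_right_inverse by blast
  qed
  then obtain K where K: "\<And>i. i \<in> I \<Longrightarrow> K i ** G i = mat 1"
    by metis
  define F where "F i = D i ** K i ** H i" for i
  have DF: "D i ** A' = - (F i ** B')"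
    if i: "i \<in> I" and "G i ** A' + H i ** B' = 0" for i and A' B' :: "'a^'d^'d"
  proof -
    have "D i ** A' = D i ** (K i ** G i) ** A'"
      using K[OF i] by simp
    also have "\<dots> = D i ** K i ** (G i ** A')"
      by (simp add: matrix_mul_assoc)
    also have "\<dots> = - (F i ** B')"
      using that by (simp add: eq_neg_iff_add_eq_0[symmetric] F_def matrix_mult_neg matrix_mul_assoc)
    finally show ?thesis .
  qed
  have F_sum: "(\<Sum>i\<in>I - {j}. F i) = 0" if j: "j \<in> I" for j
  proof -
    have "(\<Sum>i\<in>I - {j}. F i) ** W j = (\<Sum>i\<in>I - {j}. - (D i ** P i j))"
    proof (unfold matrix_sum_mult, rule sum.cong)
      fix i assume "i \<in> I - {j}"
      then show "F i ** W j = - (D i ** P i j)"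
        using DF[of i, OF _ GP] j by auto
    qed simp
    then have "(\<Sum>i\<in>I - {j}. F i) ** W j ** H j = 0"
      using DP[OF j] by (simp add: sum_negf)
    then show ?thesis
      using WH[OF j] by (simp add: matrix_mul_assoc[symmetric])
  qed
  define T where "T = sum F I"
  have F_T: "F i = T" if "i \<in> I" for i
    using F_sum[OF that] that fin by (simp add: T_def sum_diff1)
  have "sum F I = (\<Sum>i\<in>I. T)"
    using F_T by (rule sum.cong[OF refl])
  then have "T = (\<Sum>i\<in>I. T)"
    by (simp only: T_def[symmetric])
  then have "of_nat (card I - 1) * T = 0"
    using t fin by (cases "card I") (simp_all add: algebra_simps)
  then have "T = 0"
    using char by (simp add: vec_eq_iff of_nat_index)
  then show ?thesis
    using DF[OF t GH] F_T[OF t] by simp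
qed

definition preds :: "('v \<times> 'v) set \<Rightarrow> 'v \<Rightarrow> 'v set" where
  "preds E u = {v. (v, u) \<in> E}"

lemma sum_in_edges: "(\<Sum>e\<in>in_edges E u. f e) = (\<Sum>v\<in>preds E u. f (v, u))"
proof -
  have "in_edges E u = (\<lambda>v. (v, u)) ` preds E u"
    by (force simp: in_edges_def preds_def)
  then show ?thesis
    by (simp add: sum.reindex inj_on_def)
qed

lemma charq_edge_into_M_iff:
  "(v, M i) \<in> charq_edges q \<longleftrightarrow>
     (v = X 1 \<and> 1 \<le> i \<and> i \<le> q + 1) \<or> (v = S \<and> (i = 1 \<or> 4 \<le> i \<and> i \<le> q + 3))
   \<or> (\<exists>j. v = X j \<and> 2 \<le> j \<and> j \<le> q + 2 \<and> 2 \<le> i \<and> i \<le> q + 2 \<and> j \<noteq> i)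
   \<or> (\<exists>j. v = X j \<and> 1 \<le> j \<and> j \<le> q + 2 \<and> i = q + 3)"
  by (auto simp: charq_edges_def)

lemma charq_edge_into_N_iff: "(v, N i) \<in> charq_edges q \<longleftrightarrow> v = M i \<and> 1 \<le> i \<and> i \<le> q + 3"
  by (auto simp: charq_edges_def)

lemma charq_edge_into_R_iff:
  "(v, R t) \<in> charq_edges q \<longleftrightarrow>
     (\<exists>i. v = N i \<and> (i = t \<and> 1 \<le> t \<and> t \<le> q + 2 \<or> i = q + 3 \<and> 1 \<le> t \<and> t \<le> q + 2
                     \<or> t = q + 3 \<and> 1 \<le> i \<and> i \<le> q + 2))
   \<or> (\<exists>i. v = X i \<and> t = 1 \<and> 2 \<le> i \<and> i \<le> q + 1) \<or> v = X 1 \<and> t = q + 2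
   \<or> v = S \<and> (t = 2 \<or> t = 3)"
  by (auto simp: charq_edges_def)

lemma charq_sources_iff: "v \<in> charq_sources q \<longleftrightarrow> v = S \<or> (\<exists>i. v = X i \<and> 1 \<le> i \<and> i \<le> q + 2)"
  by (auto simp: charq_sources_def)

lemma charq_edge_cases:
  assumes "(v, u) \<in> charq_edges q"
  obtains "v \<in> charq_sources q" | i where "v = M i" "u = N i" | i t where "v = N i" "u = R t"
  using assms by (auto simp: charq_edges_def charq_sources_def)

lemma charq_preds_M1: "preds (charq_edges q) (M 1) = {X 1, S}"
  by (auto simp: preds_def charq_edge_into_M_iff)

lemma finite_charq_edges: "finite (charq_edges q)"
proof -
  let ?V = "{S} \<union> X ` {..q + 3} \<union> M ` {..q + 3} \<union> N ` {..q + 3} \<union> R ` {..q + 3}"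
  have "charq_edges q \<subseteq> ?V \<times> ?V"
    by (auto simp: charq_edges_def)
  then show ?thesis
    by (rule finite_subset) simp
qed

lemma finite_charq_preds: "finite (preds (charq_edges q) u)"
proof -
  have "preds (charq_edges q) u \<subseteq> fst ` charq_edges q"
    by (force simp: preds_def)
  then show ?thesis
    using finite_charq_edges finite_subset by blast
qed

definition global_coeff :: "nat \<Rightarrow> ('a::field, 'd::finite, node) vlnc \<Rightarrow> nat \<Rightarrow> node \<Rightarrow> 'a^'d^'d" where
  "global_coeff q C i v =
     (if (v, M i) \<in> charq_edges q then intC C (v, M i) (M i, N i) ** srcC C (v, M i) else 0)"

definition e_vector :: "nat \<Rightarrow> ('a::field, 'd::finite, node) vlnc \<Rightarrow> (node \<Rightarrow> 'a^'d) \<Rightarrow> nat \<Rightarrow> 'a^'d" where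
  "e_vector q C x i = (\<Sum>v\<in>preds (charq_edges q) (M i). global_coeff q C i v *v x v)"

text \<open>The network is acyclic of depth three, so the edge vectors are determined by the messages.\<close>

definition charq_flow :: "nat \<Rightarrow> ('a::field, 'd::finite, node) vlnc \<Rightarrow> (node \<Rightarrow> 'a^'d) \<Rightarrow> node \<times> node \<Rightarrow> 'a^'d" where
  "charq_flow q C x e =
     (if fst e \<in> charq_sources q then srcC C e *v x (fst e)
      else case fst e of M i \<Rightarrow> e_vector q C x i | N i \<Rightarrow> intC C (M i, N i) e *v e_vector q C x i | _ \<Rightarrow> 0)"

lemma charq_preds_M_sources: "v \<in> preds (charq_edges q) (M i) \<Longrightarrow> v \<in> charq_sources q"
  by (auto simp: preds_def charq_edge_into_M_iff charq_sources_iff)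

lemma charq_preds_N: "1 \<le> i \<Longrightarrow> i \<le> q + 3 \<Longrightarrow> preds (charq_edges q) (N i) = {M i}"
  by (auto simp: preds_def charq_edge_into_N_iff)

lemma charq_flow_equation:
  assumes e: "(v, u) \<in> charq_edges q" and ns: "v \<notin> charq_sources q"
  shows "charq_flow q C x (v, u) =
           (\<Sum>w\<in>preds (charq_edges q) v. intC C (w, v) (v, u) *v charq_flow q C x (w, v))"
  using e
proof (cases rule: charq_edge_cases)
  case (2 i)
  have "charq_flow q C x (w, M i) = srcC C (w, M i) *v x w" if "w \<in> preds (charq_edges q) (M i)" for w
    using charq_preds_M_sources[OF that] by (simp add: charq_flow_def)
  moreover have "global_coeff q C i w = intC C (w, M i) (M i, N i) ** srcC C (w, M i)"
    if "w \<in> preds (charq_edges q) (M i)" for w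
    using that by (simp add: global_coeff_def preds_def)
  ultimately show ?thesis
    using 2 ns by (simp add: charq_flow_def e_vector_def matrix_vector_mul_assoc cong: sum.cong)
next
  case (3 i t)
  then have "1 \<le> i" "i \<le> q + 3"
    using e by (auto simp: charq_edge_into_R_iff)
  then show ?thesis
    using 3 by (simp add: charq_preds_N charq_flow_def charq_sources_iff)
qed (use ns in simp)

lemma edge_vectors_charq_iff:
  "edge_vectors (charq_edges q) (charq_sources q) C x y \<longleftrightarrow>
     (\<forall>e\<in>charq_edges q. y e = charq_flow q C x e)"
proof
  assume ev: "edge_vectors (charq_edges q) (charq_sources q) C x y"
  have recursion: "y (v, u) = (\<Sum>w\<in>preds (charq_edges q) v. intC C (w, v) (v, u) *v y (w, v))"
    if "(v, u) \<in> charq_edges q" "v \<notin> charq_sources q" for v u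
    using ev that by (auto simp: edge_vectors_def sum_in_edges)
  have source: "y (v, u) = charq_flow q C x (v, u)"
    if "(v, u) \<in> charq_edges q" "v \<in> charq_sources q" for v u
    using ev that by (auto simp: edge_vectors_def charq_flow_def)
  have from_M: "y (M i, u) = charq_flow q C x (M i, u)" if "(M i, u) \<in> charq_edges q" for i u
  proof -
    have ns: "M i \<notin> charq_sources q"
      by (simp add: charq_sources_iff)
    have "y (M i, u) = (\<Sum>w\<in>preds (charq_edges q) (M i). intC C (w, M i) (M i, u) *v y (w, M i))"
      using recursion[OF that ns] .
    also have "\<dots> = (\<Sum>w\<in>preds (charq_edges q) (M i). intC C (w, M i) (M i, u) *v charq_flow q C x (w, M i))"
      using source charq_preds_M_sources by (auto simp: preds_def intro!: sum.cong)
    also have "\<dots> = charq_flow q C x (M i, u)"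
      by (rule charq_flow_equation[OF that ns, symmetric])
    finally show ?thesis .
  qed
  show "\<forall>e\<in>charq_edges q. y e = charq_flow q C x e"
  proof (clarify)
    fix v u assume e: "(v, u) \<in> charq_edges q"
    then show "y (v, u) = charq_flow q C x (v, u)"
    proof (cases rule: charq_edge_cases)
      case (3 i t)
      have ns: "N i \<notin> charq_sources q"
        by (simp add: charq_sources_iff)
      have "y (N i, u) = (\<Sum>w\<in>preds (charq_edges q) (N i). intC C (w, N i) (N i, u) *v y (w, N i))"
        using recursion e 3 ns by simp
      also have "\<dots> = (\<Sum>w\<in>preds (charq_edges q) (N i). intC C (w, N i) (N i, u) *v charq_flow q C x (w, N i))"
        using from_M by (auto simp: preds_def charq_edge_into_N_iff intro!: sum.cong)
      also have "\<dots> = charq_flow q C x (N i, u)"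
        using charq_flow_equation[symmetric] e 3 ns by simp
      finally show ?thesis
        using 3 by simp
    qed (use source from_M e in auto)
  qed
next
  assume agree: "\<forall>e\<in>charq_edges q. y e = charq_flow q C x e"
  have on_preds: "y (w, v) = charq_flow q C x (w, v)" if "w \<in> preds (charq_edges q) v" for w v
    using agree that by (simp add: preds_def)
  show "edge_vectors (charq_edges q) (charq_sources q) C x y"
    unfolding edge_vectors_def
  proof (intro conjI ballI impI)
    fix e assume "e \<in> charq_edges q" "fst e \<in> charq_sources q"
    then show "y e = srcC C e *v x (fst e)"
      using agree by (simp add: charq_flow_def)
  next
    fix e assume e: "e \<in> charq_edges q" and ns: "fst e \<notin> charq_sources q"
    obtain v u where vu: "e = (v, u)"
      by force
    have "y e = (\<Sum>w\<in>preds (charq_edges q) v. intC C (w, v) (v, u) *v charq_flow q C x (w, v))"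
      using agree e ns charq_flow_equation unfolding vu by simp
    also have "\<dots> = (\<Sum>e'\<in>in_edges (charq_edges q) (fst e). intC C e' e *v y e')"
      using on_preds by (simp add: vu sum_in_edges)
    finally show "y e = (\<Sum>e'\<in>in_edges (charq_edges q) (fst e). intC C e' e *v y e')" .
  qed
qed

lemma decoding_sum_at_R:
  assumes ev: "edge_vectors (charq_edges q) (charq_sources q) C x y"
    and P: "preds (charq_edges q) (R t) = N ` I \<union> J" and J: "J \<subseteq> charq_sources q"
    and fin: "finite I" "finite J"
  shows "(\<Sum>e\<in>in_edges (charq_edges q) (R t). B e *v y e)
       = (\<Sum>i\<in>I. (B (N i, R t) ** intC C (M i, N i) (N i, R t)) *v e_vector q C x i)
       + (\<Sum>u\<in>J. (B (u, R t) ** srcC C (u, R t)) *v x u)"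
proof -
  have flow: "y (v, R t) = charq_flow q C x (v, R t)" if "v \<in> N ` I \<union> J" for v
    using ev that P by (auto simp: edge_vectors_charq_iff preds_def)
  have "N ` I \<inter> J = {}"
    using J by (auto simp: charq_sources_iff)
  then have "(\<Sum>e\<in>in_edges (charq_edges q) (R t). B e *v y e)
      = (\<Sum>v\<in>N ` I. B (v, R t) *v y (v, R t)) + (\<Sum>v\<in>J. B (v, R t) *v y (v, R t))"
    using fin by (simp add: sum_in_edges P sum.union_disjoint)
  also have "\<dots> = (\<Sum>i\<in>I. (B (N i, R t) ** intC C (M i, N i) (N i, R t)) *v e_vector q C x i)
       + (\<Sum>u\<in>J. (B (u, R t) ** srcC C (u, R t)) *v x u)"
    using J flow
    by (auto simp: sum.reindex inj_on_def charq_flow_def charq_sources_iff matrix_vector_mul_assoc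
             intro!: sum.cong arg_cong2[where f = "(+)"])
  finally show ?thesis .
qed

definition side_info :: "nat \<Rightarrow> nat \<Rightarrow> node set" where
  "side_info q t = {v \<in> charq_sources q. (v, R t) \<in> charq_edges q}"

lemma finite_side_info: "finite (side_info q t)"
  by (rule finite_subset[OF _ finite_charq_preds]) (auto simp: side_info_def preds_def)

definition demanded :: "nat \<Rightarrow> nat \<Rightarrow> node" where
  "demanded q t = (if t = 1 then X (q + 2) else X t)"

lemma charq_demands_R: "1 \<le> t \<Longrightarrow> t \<le> q + 2 \<Longrightarrow> charq_demands q (R t) = {demanded q t}"
  by (auto simp: charq_demands_def demanded_def)

lemma charq_preds_R: "1 \<le> t \<Longrightarrow> t \<le> q + 2 \<Longrightarrow> preds (charq_edges q) (R t) = N ` {t, q + 3} \<union> side_info q t"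
  by (auto simp: preds_def side_info_def charq_edge_into_R_iff charq_sources_iff)

lemma charq_preds_R_last: "1 \<le> q \<Longrightarrow> preds (charq_edges q) (R (q + 3)) = N ` {1..q + 2}"
  by (auto simp: preds_def charq_edge_into_R_iff)

lemma charq_preds_M_last_split:
  assumes "2 \<le> q" "1 \<le> t" "t \<le> q + 2"
  shows "preds (charq_edges q) (M (q + 3)) = insert (demanded q t) (preds (charq_edges q) (M t) \<union> side_info q t)"
    and "demanded q t \<notin> preds (charq_edges q) (M t) \<union> side_info q t"
    and "preds (charq_edges q) (M t) \<inter> side_info q t = {}"
  using assms by (auto simp: preds_def side_info_def demanded_def charq_edge_into_M_iff
      charq_edge_into_R_iff charq_sources_iff)

lemma e_vector_single_message: "e_vector q C ((\<lambda>v. if v = w then a else 0)) i = global_coeff q C i w *v a"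
proof -
  have "e_vector q C ((\<lambda>v. if v = w then a else 0)) i
      = (\<Sum>v\<in>preds (charq_edges q) (M i). if v = w then global_coeff q C i w *v a else 0)"
    unfolding e_vector_def by (rule sum.cong) auto
  then show ?thesis
    using finite_charq_preds by (simp add: preds_def global_coeff_def)
qed

lemma charq_flow_edge_vectors:
  "edge_vectors (charq_edges q) (charq_sources q) C x (charq_flow q C x)"
  by (simp add: edge_vectors_charq_iff)

definition decoding_coeff :: "('a::field, 'd::finite, node) vlnc \<Rightarrow> nat \<Rightarrow> node \<Rightarrow> nat \<Rightarrow> 'a^'d^'d" where
  "decoding_coeff C t v i = decC C (R t) v (N i, R t) ** intC C (M i, N i) (N i, R t)"

lemma solution_decodes_at_R:
  fixes C :: "('a::field, 'd::finite, node) vlnc"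
  assumes sol: "is_vlnc_solution (charq_edges q) (charq_sources q) (charq_terminals q) (charq_demands q) C"
    and t: "1 \<le> t" "t \<le> q + 2" and w: "w \<notin> side_info q t"
  shows "decoding_coeff C t (demanded q t) t ** global_coeff q C t w
       + decoding_coeff C t (demanded q t) (q + 3) ** global_coeff q C (q + 3) w
       = (if w = demanded q t then mat 1 else 0)"
proof (rule matrix_eq[THEN iffD2], rule allI)
  fix a :: "'a^'d"
  let ?x = "(\<lambda>v. if v = w then a else 0)"
  have "R t \<in> charq_terminals q" "demanded q t \<in> charq_demands q (R t)"
    using t by (auto simp: charq_terminals_def charq_demands_R)
  then have "?x (demanded q t)
      = (\<Sum>e\<in>in_edges (charq_edges q) (R t). decC C (R t) (demanded q t) e *v charq_flow q C ?x e)"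
    by (rule sol[unfolded is_vlnc_solution_def, rule_format, OF charq_flow_edge_vectors, symmetric])
  also have "\<dots> = (\<Sum>i\<in>{t, q + 3}. decoding_coeff C t (demanded q t) i *v e_vector q C ?x i)
      + (\<Sum>u\<in>side_info q t. (decC C (R t) (demanded q t) (u, R t) ** srcC C (u, R t)) *v ?x u)"
    by (subst decoding_sum_at_R[OF charq_flow_edge_vectors charq_preds_R[OF t]])
      (simp_all add: finite_side_info decoding_coeff_def, auto simp: side_info_def)
  also have "(\<Sum>u\<in>side_info q t. (decC C (R t) (demanded q t) (u, R t) ** srcC C (u, R t)) *v ?x u) = 0"
    using w by (intro sum.neutral) auto
  finally show "(decoding_coeff C t (demanded q t) t ** global_coeff q C t w
       + decoding_coeff C t (demanded q t) (q + 3) ** global_coeff q C (q + 3) w) *v a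
       = (if w = demanded q t then mat 1 else 0) *v a"
    using t by (cases "w = demanded q t")
      (simp_all add: e_vector_single_message matrix_vector_mul_assoc matrix_vector_mult_add_rdistrib)
qed

lemma solution_decodes_at_R_last:
  fixes C :: "('a::field, 'd::finite, node) vlnc"
  assumes sol: "is_vlnc_solution (charq_edges q) (charq_sources q) (charq_terminals q) (charq_demands q) C"
    and q: "1 \<le> q"
  shows "(\<Sum>i\<in>{1..q + 2}. decoding_coeff C (q + 3) (X 1) i ** global_coeff q C i w)
       = (if w = X 1 then mat 1 else 0)"
proof (rule matrix_eq[THEN iffD2], rule allI)
  fix a :: "'a^'d"
  let ?x = "(\<lambda>v. if v = w then a else 0)"
  have "R (q + 3) \<in> charq_terminals q" "X 1 \<in> charq_demands q (R (q + 3))"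
    by (auto simp: charq_terminals_def charq_demands_def)
  then have "?x (X 1)
      = (\<Sum>e\<in>in_edges (charq_edges q) (R (q + 3)). decC C (R (q + 3)) (X 1) e *v charq_flow q C ?x e)"
    by (rule sol[unfolded is_vlnc_solution_def, rule_format, OF charq_flow_edge_vectors, symmetric])
  also have "\<dots> = (\<Sum>i\<in>{1..q + 2}. decoding_coeff C (q + 3) (X 1) i *v e_vector q C ?x i)"
    by (subst decoding_sum_at_R[OF charq_flow_edge_vectors trans[OF charq_preds_R_last[OF q] Un_empty_right[symmetric]]])
      (simp_all add: decoding_coeff_def)
  finally show "(\<Sum>i\<in>{1..q + 2}. decoding_coeff C (q + 3) (X 1) i ** global_coeff q C i w) *v a
       = (if w = X 1 then mat 1 else 0) *v a"
    by (cases "w = X 1")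
      (simp_all add: e_vector_single_message matrix_vector_mul_assoc matrix_vector_sum_mult del: sum.cl_ivl_Suc)
qed

lemma solution_global_coeff_S_vanishes:
  fixes C :: "('a::field, 'd::finite, node) vlnc"
  assumes sol: "is_vlnc_solution (charq_edges q) (charq_sources q) (charq_terminals q) (charq_demands q) C"
    and q: "2 \<le> q" and char: "of_nat q \<noteq> (0::'a)"
  shows "global_coeff q C 1 S = 0"
proof -
  let ?I = "{2..q + 2}"
  define G where "G t = decoding_coeff C t (X t) t" for t
  define H where "H t = decoding_coeff C t (X t) (q + 3)" for t
  define D where "D i = decoding_coeff C (q + 3) (X 1) i" for i
  have at_R: "G t ** global_coeff q C t w + H t ** global_coeff q C (q + 3) w = (if w = X t then mat 1 else 0)"
    if "t \<in> ?I" "w \<notin> side_info q t" for t w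
    using solution_decodes_at_R[OF sol, of t w] that by (simp add: G_def H_def demanded_def)
  have at_R_last: "(\<Sum>i\<in>insert 1 ?I. D i ** global_coeff q C i w) = (if w = X 1 then mat 1 else 0)" for w
  proof -
    have "insert 1 ?I = {1..q + 2}"
      by auto
    then show ?thesis
      unfolding D_def using solution_decodes_at_R_last[OF sol] q by simp
  qed
  have X_not_side: "X j \<notin> side_info q t" if "j \<in> ?I" "t \<in> ?I" for j t
    using that by (auto simp: side_info_def charq_edge_into_R_iff)
  have no_edge: "global_coeff q C t w = 0" if "t \<in> ?I" "w = X t \<or> w \<in> side_info q t" for t w
    using charq_preds_M_last_split(2,3)[OF q, of t] that
    by (auto simp: global_coeff_def preds_def demanded_def)
  have annihilate: "D t ** global_coeff q C t w = 0" if t: "t \<in> ?I" for t w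
  proof (cases "w = X t \<or> w \<in> side_info q t")
    case True
    then show ?thesis
      using no_edge t by simp
  next
    case False
    show ?thesis
    proof (rule decoding_constraints_force_annihilation[where I = ?I and G = G and H = H and D = D
          and W = "\<lambda>j. global_coeff q C (q + 3) (X j)" and P = "\<lambda>i j. global_coeff q C i (X j)"])
      show "of_nat (card ?I - 1) \<noteq> (0::'a)"
        using char by simp
      show "H j ** global_coeff q C (q + 3) (X j) = mat 1" if "j \<in> ?I" for j
        using at_R[OF that X_not_side[OF that that]] no_edge[OF that] by simp
      show "G j ** global_coeff q C j (X i) + H j ** global_coeff q C (q + 3) (X i) = 0"
        if "j \<in> ?I" "i \<in> ?I - {j}" for i j
        using at_R[OF that(1) X_not_side] that by auto
      show "(\<Sum>i\<in>?I - {j}. D i ** global_coeff q C i (X j)) = 0" if j: "j \<in> ?I" for j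
      proof -
        have "global_coeff q C 1 (X j) = 0"
          using j by (simp add: global_coeff_def charq_edge_into_M_iff)
        then have "(\<Sum>i\<in>?I. D i ** global_coeff q C i (X j)) = 0"
          using at_R_last[of "X j"] j by (simp del: sum.cl_ivl_Suc)
        moreover have "global_coeff q C j (X j) = 0"
          using no_edge[OF j] by simp
        ultimately show ?thesis
          using sum.remove[of ?I j "\<lambda>i. D i ** global_coeff q C i (X j)"] j by (simp del: sum.cl_ivl_Suc)
      qed
      show "G t ** global_coeff q C t w + H t ** global_coeff q C (q + 3) w = 0"
        using at_R[OF t] False by simp
    qed (use t in simp_all)
  qed
  have "(\<Sum>i\<in>?I. D i ** global_coeff q C i w) = 0" for w
    by (simp add: annihilate)
  then have "D 1 ** global_coeff q C 1 w = (if w = X 1 then mat 1 else 0)" for w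
    using at_R_last[of w] by simp
  from this[of S] this[of "X 1"] have "D 1 ** global_coeff q C 1 S = 0" "global_coeff q C 1 (X 1) ** D 1 = mat 1"
    using matrix_left_right_inverse by auto
  then show ?thesis
    by (metis matrix_mul_assoc matrix_mul_lid times0_right)
qed

definition identity_code :: "nat \<Rightarrow> ('a::field, 'd::finite, node) vlnc" where
  "identity_code q =
     \<lparr>srcC = (\<lambda>_. mat 1), intC = (\<lambda>_ _. mat 1),
      decC = (\<lambda>t v e. if t = R (q + 3) \<or> fst e = N (q + 3) then mat 1 else - mat 1)\<rparr>"

lemma identity_code_simps [simp]:
  "srcC (identity_code q) e = mat 1"
  "intC (identity_code q) e' e = mat 1"
  "decC (identity_code q) t v e = (if t = R (q + 3) \<or> fst e = N (q + 3) then mat 1 else - mat 1)"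
  by (simp_all add: identity_code_def)

lemma e_vector_identity_code: "e_vector q (identity_code q) x i = (\<Sum>v\<in>preds (charq_edges q) (M i). x v)"
  unfolding e_vector_def by (rule sum.cong) (auto simp: global_coeff_def preds_def)

lemma e_vector_identity_code_split:
  assumes "2 \<le> q" "1 \<le> t" "t \<le> q + 2"
  shows "e_vector q (identity_code q) x (q + 3)
       = x (demanded q t) + e_vector q (identity_code q) x t + (\<Sum>u\<in>side_info q t. x u)"
  using charq_preds_M_last_split[OF assms]
  by (simp add: e_vector_identity_code finite_charq_preds finite_side_info sum.union_disjoint add.assoc)

lemma identity_code_decodes_at_R:
  assumes ev: "edge_vectors (charq_edges q) (charq_sources q) (identity_code q) x y"
    and q: "2 \<le> q" and t: "1 \<le> t" "t \<le> q + 2"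
  shows "(\<Sum>e\<in>in_edges (charq_edges q) (R t). decC (identity_code q) (R t) v e *v y e) = x (demanded q t)"
proof -
  have side: "(\<Sum>u\<in>side_info q t. decC (identity_code q) (R t) v (u, R t) *v x u) = (\<Sum>u\<in>side_info q t. - x u)"
    using t by (intro sum.cong) (auto simp: side_info_def charq_sources_iff matrix_neg_vector_mult)
  have "(\<Sum>e\<in>in_edges (charq_edges q) (R t). decC (identity_code q) (R t) v e *v y e)
      = (\<Sum>i\<in>{t, q + 3}. decC (identity_code q) (R t) v (N i, R t) *v e_vector q (identity_code q) x i)
      + (\<Sum>u\<in>side_info q t. decC (identity_code q) (R t) v (u, R t) *v x u)"
    by (subst decoding_sum_at_R[OF ev charq_preds_R[OF t]])
      (simp_all add: finite_side_info del: identity_code_simps, auto simp: side_info_def)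
  also have "\<dots> = e_vector q (identity_code q) x (q + 3) - e_vector q (identity_code q) x t
      - (\<Sum>u\<in>side_info q t. x u)"
    using t by (simp only: side) (simp add: matrix_neg_vector_mult sum_negf)
  finally show ?thesis
    using e_vector_identity_code_split[OF q t, where x = x] by simp
qed

lemma sum_side_info:
  assumes "2 \<le> q" "2 \<le> t" "t \<le> q + 2"
  shows "(\<Sum>u\<in>side_info q t. x u) = (if t \<le> 3 then x S else 0) + (if t = q + 2 then x (X 1) else 0)"
proof -
  have "side_info q t = (if t \<le> 3 then {S} else {}) \<union> (if t = q + 2 then {X 1} else {})"
    using assms by (auto simp: side_info_def charq_edge_into_R_iff charq_sources_iff)
  then show ?thesis
    using assms by (cases "t \<le> 3") auto
qed

lemma identity_code_decodes_at_R_last: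
  fixes x :: "node \<Rightarrow> 'a::field^'d::finite"
  assumes ev: "edge_vectors (charq_edges q) (charq_sources q) (identity_code q) x y"
    and q: "2 \<le> q" and char: "of_nat q = (0::'a)"
  shows "(\<Sum>e\<in>in_edges (charq_edges q) (R (q + 3)). decC (identity_code q) (R (q + 3)) v e *v y e) = x (X 1)"
proof -
  let ?e = "e_vector q (identity_code q) x"
  let ?I = "{2..q + 2}"
  define Xs where "Xs = (\<Sum>j\<in>?I. x (X j))"
  have e_1: "?e 1 = x (X 1) + x S"
    unfolding e_vector_identity_code charq_preds_M1 by simp
  have e_last: "?e (q + 3) = x S + x (X 1) + Xs"
  proof -
    have "preds (charq_edges q) (M (q + 3)) = insert S (insert (X 1) (X ` ?I))"
      using q by (auto simp: preds_def charq_edge_into_M_iff)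
    moreover have "S \<notin> insert (X 1) (X ` ?I)" "X 1 \<notin> X ` ?I"
      by auto
    ultimately show ?thesis
      by (simp add: e_vector_identity_code Xs_def sum.reindex inj_on_def add.assoc del: sum.cl_ivl_Suc)
  qed
  have "(\<Sum>e\<in>in_edges (charq_edges q) (R (q + 3)). decC (identity_code q) (R (q + 3)) v e *v y e)
      = (\<Sum>i\<in>insert 1 ?I. ?e i)"
  proof -
    have "insert 1 ?I = {1..q + 2}"
      by auto
    then show ?thesis
      using q by (subst decoding_sum_at_R[OF ev trans[OF charq_preds_R_last Un_empty_right[symmetric]]]) simp_all
  qed
  also have "\<dots> = ?e 1 + (\<Sum>i\<in>?I. ?e (q + 3) - x (X i)
      - ((if i \<le> 3 then x S else 0) + (if i = q + 2 then x (X 1) else 0)))"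
  proof -
    have "?e i = ?e (q + 3) - x (X i) - ((if i \<le> 3 then x S else 0) + (if i = q + 2 then x (X 1) else 0))"
      if "i \<in> ?I" for i
      using e_vector_identity_code_split[OF q, of i x] sum_side_info[OF q, of i x] that
      by (simp add: demanded_def)
    then show ?thesis
      by simp
  qed
  also have "\<dots> = ?e 1 + ?e (q + 3) - Xs - (x S + x S + x (X 1))"
  proof -
    have "(\<Sum>i\<in>?I. ?e (q + 3)) = of_nat q * ?e (q + 3) + ?e (q + 3)"
      by (simp add: algebra_simps)
    moreover have "of_nat q * ?e (q + 3) = 0"
      using char by (simp add: vec_eq_iff of_nat_index)
    ultimately have const: "(\<Sum>i\<in>?I. ?e (q + 3)) = ?e (q + 3)"
      by simp
    have "{i \<in> ?I. i \<le> 3} = {2, 3}"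
      using q by auto
    then have low: "(\<Sum>i\<in>?I. if i \<le> 3 then x S else 0) = x S + x S"
      by (simp flip: sum.inter_filter del: sum.cl_ivl_Suc)
    show ?thesis
      using const low by (simp add: sum_subtractf sum.distrib Xs_def del: sum.cl_ivl_Suc)
  qed
  also have "\<dots> = (x (X 1) + x S) + (x S + x (X 1) + Xs) - Xs - (x S + x S + x (X 1))"
    by (simp only: e_1 e_last)
  also have "\<dots> = x (X 1)"
    by (simp add: algebra_simps)
  finally show ?thesis .
qed

lemma identity_code_solution:
  assumes q: "2 \<le> q" and char: "of_nat q = (0::'a::field)"
  shows "is_vlnc_solution (charq_edges q) (charq_sources q) (charq_terminals q) (charq_demands q)
           (identity_code q :: ('a, 'd::finite, node) vlnc)"
  unfolding is_vlnc_solution_def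
proof (intro allI impI ballI)
  fix x :: "node \<Rightarrow> 'a^'d" and y t v
  assume ev: "edge_vectors (charq_edges q) (charq_sources q) (identity_code q) x y"
    and t: "t \<in> charq_terminals q" and v: "v \<in> charq_demands q t"
  obtain k where k: "t = R k" "1 \<le> k" "k \<le> q + 3"
    using t by (auto simp: charq_terminals_def)
  show "(\<Sum>e\<in>in_edges (charq_edges q) t. decC (identity_code q) t v e *v y e) = x v"
  proof (cases "k = q + 3")
    case True
    then show ?thesis
      using v k identity_code_decodes_at_R_last[OF ev q char] by (simp add: charq_demands_def)
  next
    case False
    then show ?thesis
      using v k identity_code_decodes_at_R[OF ev q] by (simp add: charq_demands_R)
  qed
qed


lemma identity_code_s_coeff: "s_coeff_on_e1 q (identity_code q :: ('a::field, 'd::finite, node) vlnc) (mat 1)"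
  unfolding s_coeff_on_e1_def
proof (intro exI[of _ "mat 1"] allI impI)
  fix x :: "node \<Rightarrow> 'a^'d" and y
  assume "edge_vectors (charq_edges q) (charq_sources q) (identity_code q) x y"
  then have "y e1 = charq_flow q (identity_code q) x e1"
    by (simp add: edge_vectors_charq_iff e1_def charq_edge_into_N_iff)
  also have "\<dots> = e_vector q (identity_code q) x 1"
    by (simp add: e1_def charq_flow_def charq_sources_iff)
  also have "\<dots> = mat 1 *v x (X 1) + mat 1 *v x S"
    unfolding e_vector_identity_code charq_preds_M1 by simp
  finally show "y e1 = mat 1 *v x (X 1) + mat 1 *v x S" .
qed

lemma s_coeff_on_e1_eq_global_coeff:
  assumes "s_coeff_on_e1 q C A1"
  shows "A1 = global_coeff q C 1 S"
proof -
  obtain M1 where M1: "\<And>x y. edge_vectors (charq_edges q) (charq_sources q) C x y \<Longrightarrow>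
      y e1 = M1 *v x (X 1) + A1 *v x S"
    using assms unfolding s_coeff_on_e1_def by blast
  have "A1 *v a = global_coeff q C 1 S *v a" for a
  proof -
    let ?x = "\<lambda>v. if v = S then a else 0"
    have "A1 *v a = charq_flow q C ?x e1"
      using M1[OF charq_flow_edge_vectors] by simp
    also have "\<dots> = global_coeff q C 1 S *v a"
      by (simp add: e1_def charq_flow_def charq_sources_iff e_vector_single_message)
    finally show ?thesis .
  qed
  then show ?thesis
    by (simp add: matrix_eq)
qed


lemma mat_1_neq_0: "(mat 1 :: 'a::zero_neq_one^'n^'n) \<noteq> 0"
proof
  fix i :: 'n
  assume "(mat 1 :: 'a^'n^'n) = 0"
  then have "(mat 1 :: 'a^'n^'n) $ i $ i = 0"
    by simp
  then show False
    by (simp add: mat_def)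
qed


theorem lemma3:
  fixes q :: nat
  assumes "q \<ge> 2"
  shows "(\<exists>(C :: ('a::{finite,field}, 'd::finite, node) vlnc) A1.
            is_vlnc_solution (charq_edges q) (charq_sources q) (charq_terminals q)
              (charq_demands q) C
          \<and> s_coeff_on_e1 q C A1 \<and> A1 \<noteq> 0)
         \<longleftrightarrow> CHAR('a) dvd q"
proof
  assume "\<exists>(C :: ('a, 'd, node) vlnc) A1.
            is_vlnc_solution (charq_edges q) (charq_sources q) (charq_terminals q) (charq_demands q) C
          \<and> s_coeff_on_e1 q C A1 \<and> A1 \<noteq> 0"
  then obtain C :: "('a, 'd, node) vlnc" and A1
    where sol: "is_vlnc_solution (charq_edges q) (charq_sources q) (charq_terminals q) (charq_demands q) C"
      and s: "s_coeff_on_e1 q C A1" and "A1 \<noteq> 0"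
    by blast
  then have "global_coeff q C 1 S \<noteq> 0"
    using s_coeff_on_e1_eq_global_coeff[OF s] by blast
  then have "of_nat q = (0::'a)"
    using solution_global_coeff_S_vanishes[OF sol assms] by blast
  then show "CHAR('a) dvd q"
    by (simp add: of_nat_eq_0_iff_char_dvd)
next
  assume "CHAR('a) dvd q"
  then have "of_nat q = (0::'a)"
    by (simp add: of_nat_eq_0_iff_char_dvd)
  then show "\<exists>(C :: ('a, 'd, node) vlnc) A1.
            is_vlnc_solution (charq_edges q) (charq_sources q) (charq_terminals q) (charq_demands q) C
          \<and> s_coeff_on_e1 q C A1 \<and> A1 \<noteq> 0"
    using identity_code_solution[OF assms] identity_code_s_coeff mat_1_neq_0 by blast
qed

end
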